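(* Let $1\le l\le g$, $\beta\in\mathbb F_p^\times$ and $\alpha=\beta^2$. Then the sequence of polynomial functions $$J^{l,s}(x_1,\dots,x_{n-1})=x_1^{(p^s-1)/2}\,Q^{l,s}(x_2,\dots,x_{n-1}),\qquad s=1,2,\dots,$$ converges uniformly on $D_{\alpha,1}\times D_{0,1}^{n-2}$ to the function $\omega(\beta)\,J^l$, where $J^l(x_1,\dots,x_{n-1})=x_1^{-1/2}\,Q^l(x_2,\dots,x_{n-1})$.
   Context: Let $p$ be an odd prime, $g\ge1$, $n=2g+1$, $p>n$. $\mathbb Z_p$, $|\cdot|_p$ as usual. For $t\in\mathbb F_p$ (or $\mathbb Z_p$), $\omega(t)$ is the Teichmüller representative: the unique $\omega\in\mathbb Z_p$ with $\omega^p=\omega$, $\omega\equiv t\pmod p$. For $\gamma\in\mathbb F_p$, $D_{\gamma,1}=\{t\in\mathbb Z_p:|t-\omega(\gamma)|_p<1\}$. For $\beta\neq0$, $x_1^{1/2}:D_{\alpha,1}\to D_{\beta,1}$ denotes the inverse of the bijection $t\mapsto t^2$, $D_{\beta,1}\to D_{\alpha,1}$, and $x_1^{-1/2}=1/x_1^{1/2}$. Uniform convergence on $S$ means convergence in $\sup_S|\cdot|_p$ (coordinatewise). Binomials $\binom{y}{k}=y(y-1)\cdots(y-k+1)/k!$. For $a=(a_1,\dots,a_{n-1})$ write $X(a)=\prod_{i=2}^{n-2l}x_i^{a_{i-1}}\prod_{i=n-2l+1}^{n-1}x_i^{a_i}$. For a parameter $\mu$ define $Q^{l}[\mu]=(Q_1,\dots,Q_n)$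 by: for $1\le j\le n-2l-1$: $Q_j=x_{j+1}\sum\binom{\mu-1}{a_j}\prod_{i\ne j}\binom{\mu}{a_i}X(a)$ over $a$ with $a_1+\dots+a_{n-2l}=a_{n-2l+1}+\dots+a_{n-1}+l-1$; for $j=n-2l$: $Q_j=\sum\binom{\mu-1}{a_j}\prod_{i\ne j}\binom{\mu}{a_i}X(a)$ with the same condition ($l-1$); for $n-2l<j\le n-1$: $Q_j=\sum\binom{\mu-1}{a_j}\prod_{i\ne j}\binom{\mu}{a_i}X(a)$ over $a$ with $a_1+\dots+a_{n-2l}=a_{n-2l+1}+\dots+a_{n-1}+l$; $Q_n=\sum\prod_{i=1}^{n-1}\binom{\mu}{a_i}X(a)$ over $a$ with $a_1+\dots+a_{n-2l}=a_{n-2l+1}+\dots+a_{n-1}+l$. Here $\prod_{i\ne j}$ is over $i\in\{1,\dots,n-1\}\setminus\{j\}$. $Q^l$ is the formal power series $Q^l[-\tfrac12]$ (sum over all $a\in\mathbb Z_{\ge0}^{n-1}$; it has $p$-adic integer coefficients and converges on $D_{0,1}^{n-2}$), and $Q^{l,s}$ is the polynomial $Q^l[\tfrac{p^s-1}2]$ (sum over $a$ with $0\le a_i\le\frac{p^s-1}2$). *)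

theory Defs
  imports Complex_Main "HOL-Computational_Algebra.Primes" "HOL-Number_Theory.Cong"
begin

text \<open>An element x of Z_p is represented by the sequence of its residues:
 x k is the representative in [0, p^k) of x modulo p^k.\<close>

definition Zp :: "int \<Rightarrow> (nat \<Rightarrow> int) set" where
  "Zp p = {x. \<forall>k. 0 \<le> x k \<and> x k < p ^ k \<and> x (Suc k) mod p ^ k = x k}"

definition zp_of_int :: "int \<Rightarrow> int \<Rightarrow> nat \<Rightarrow> int" where
  "zp_of_int p c = (\<lambda>k. c mod p ^ k)"

text \<open>Embedding of p-integral rationals (denominator prime to p) into Z_p.\<close>
definition zp_of_rat :: "int \<Rightarrow> rat \<Rightarrow> nat \<Rightarrow> int" where
  "zp_of_rat p r = (\<lambda>k. THE c. 0 \<le> c \<and> c < p ^ k \<and>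
      [c * snd (quotient_of r) = fst (quotient_of r)] (mod p ^ k))"

definition zp_add :: "int \<Rightarrow> (nat \<Rightarrow> int) \<Rightarrow> (nat \<Rightarrow> int) \<Rightarrow> nat \<Rightarrow> int" where
  "zp_add p x y = (\<lambda>k. (x k + y k) mod p ^ k)"

definition zp_diff :: "int \<Rightarrow> (nat \<Rightarrow> int) \<Rightarrow> (nat \<Rightarrow> int) \<Rightarrow> nat \<Rightarrow> int" where
  "zp_diff p x y = (\<lambda>k. (x k - y k) mod p ^ k)"

definition zp_mult :: "int \<Rightarrow> (nat \<Rightarrow> int) \<Rightarrow> (nat \<Rightarrow> int) \<Rightarrow> nat \<Rightarrow> int" where
  "zp_mult p x y = (\<lambda>k. (x k * y k) mod p ^ k)"

definition zp_pow :: "int \<Rightarrow> (nat \<Rightarrow> int) \<Rightarrow> nat \<Rightarrow> nat \<Rightarrow> int" where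
  "zp_pow p x m = (\<lambda>k. (x k ^ m) mod p ^ k)"

definition zp_prod :: "int \<Rightarrow> ('a \<Rightarrow> nat \<Rightarrow> int) \<Rightarrow> 'a set \<Rightarrow> nat \<Rightarrow> int" where
  "zp_prod p f I = (\<lambda>k. (\<Prod>i\<in>I. f i k) mod p ^ k)"

text \<open>p-adic (unconditional) sum of a family tending to 0: at level k only
 finitely many terms are nonzero modulo p^k, and we add those.  For a finite
 index set this is the ordinary finite sum in Z_p.\<close>
definition zp_sum :: "int \<Rightarrow> ('a \<Rightarrow> nat \<Rightarrow> int) \<Rightarrow> 'a set \<Rightarrow> nat \<Rightarrow> int" where
  "zp_sum p f A = (\<lambda>k. (\<Sum>a\<in>{a\<in>A. f a k mod p ^ k \<noteq> 0}. f a k) mod p ^ k)"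

definition zp_inv :: "int \<Rightarrow> (nat \<Rightarrow> int) \<Rightarrow> nat \<Rightarrow> int" where
  "zp_inv p x = (THE y. y \<in> Zp p \<and> zp_mult p x y = zp_of_int p 1)"

text \<open>p-adic absolute value |x|_p = p^(-v(x)), v(x) the p-adic valuation.\<close>
definition zp_abs :: "int \<Rightarrow> (nat \<Rightarrow> int) \<Rightarrow> real" where
  "zp_abs p x = (if \<forall>k. x k = 0 then 0
                 else 1 / (real_of_int p ^ (LEAST k. x (Suc k) \<noteq> 0)))"

definition teich :: "int \<Rightarrow> int \<Rightarrow> nat \<Rightarrow> int" where
  "teich p t = (THE w. w \<in> Zp p \<and> zp_pow p w (nat p) = w \<and> w 1 = t mod p)"

definition Ddisc :: "int \<Rightarrow> int \<Rightarrow> (nat \<Rightarrow> int) set" where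
  "Ddisc p \<gamma> = {t \<in> Zp p. zp_abs p (zp_diff p t (teich p \<gamma>)) < 1}"

definition zp_sqrt :: "int \<Rightarrow> int \<Rightarrow> (nat \<Rightarrow> int) \<Rightarrow> nat \<Rightarrow> int" where
  "zp_sqrt p \<beta> x = (THE y. y \<in> Ddisc p \<beta> \<and> zp_mult p y y = x)"

text \<open>Multi-indices a = (a_1,...,a_{n-1}) are functions nat => nat vanishing
 outside {1..n-1}; points (x_1,...,x_{n-1}) are functions from indices to Z_p.\<close>

definition Xmon :: "int \<Rightarrow> nat \<Rightarrow> nat \<Rightarrow> (nat \<Rightarrow> nat) \<Rightarrow> (nat \<Rightarrow> nat \<Rightarrow> int) \<Rightarrow> nat \<Rightarrow> int" where
  "Xmon p n l a x = zp_mult p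
      (zp_prod p (\<lambda>i. zp_pow p (x i) (a (i - 1))) {2..n - 2*l})
      (zp_prod p (\<lambda>i. zp_pow p (x i) (a i)) {n - 2*l + 1..n - 1})"

definition Qcoef :: "nat \<Rightarrow> rat \<Rightarrow> nat \<Rightarrow> (nat \<Rightarrow> nat) \<Rightarrow> rat" where
  "Qcoef n \<mu> j a = (if j \<le> n - 1
      then ((\<mu> - 1) gchoose a j) * (\<Prod>i\<in>{1..n - 1} - {j}. \<mu> gchoose a i)
      else (\<Prod>i\<in>{1..n - 1}. \<mu> gchoose a i))"

definition Qidx :: "nat \<Rightarrow> nat \<Rightarrow> nat \<Rightarrow> (nat \<Rightarrow> nat) set" where
  "Qidx n l j = {a. (\<forall>i. i \<notin> {1..n - 1} \<longrightarrow> a i = 0) \<and>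
      (\<Sum>i=1..n - 2*l. a i) = (\<Sum>i=n - 2*l + 1..n - 1. a i) + (if j \<le> n - 2*l then l - 1 else l)}"

definition Qcomp :: "int \<Rightarrow> nat \<Rightarrow> nat \<Rightarrow> rat \<Rightarrow> (nat \<Rightarrow> nat) set \<Rightarrow> nat
                      \<Rightarrow> (nat \<Rightarrow> nat \<Rightarrow> int) \<Rightarrow> nat \<Rightarrow> int" where
  "Qcomp p n l \<mu> A j x = zp_mult p
      (if 1 \<le> j \<and> j \<le> n - 2*l - 1 then x (j + 1) else zp_of_int p 1)
      (zp_sum p (\<lambda>a. zp_mult p (zp_of_rat p (Qcoef n \<mu> j a)) (Xmon p n l a x))
                 (Qidx n l j \<inter> A))"

definition Ql :: "int \<Rightarrow> nat \<Rightarrow> nat \<Rightarrow> nat \<Rightarrow> (nat \<Rightarrow> nat \<Rightarrow> int) \<Rightarrow> nat \<Rightarrow> int" where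
  "Ql p n l j x = Qcomp p n l (- 1/2) UNIV j x"

definition Qls :: "int \<Rightarrow> nat \<Rightarrow> nat \<Rightarrow> nat \<Rightarrow> nat \<Rightarrow> (nat \<Rightarrow> nat \<Rightarrow> int) \<Rightarrow> nat \<Rightarrow> int" where
  "Qls p n l s j x = Qcomp p n l (of_int ((p ^ s - 1) div 2))
       {a. \<forall>i. a i \<le> nat ((p ^ s - 1) div 2)} j x"

definition Jls :: "int \<Rightarrow> nat \<Rightarrow> nat \<Rightarrow> nat \<Rightarrow> nat \<Rightarrow> (nat \<Rightarrow> nat \<Rightarrow> int) \<Rightarrow> nat \<Rightarrow> int" where
  "Jls p n l s j x = zp_mult p (zp_pow p (x 1) (nat ((p ^ s - 1) div 2))) (Qls p n l s j x)"

definition Jl :: "int \<Rightarrow> int \<Rightarrow> nat \<Rightarrow> nat \<Rightarrow> nat \<Rightarrow> (nat \<Rightarrow> nat \<Rightarrow> int) \<Rightarrow> nat \<Rightarrow> int" where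
  "Jl p \<beta> n l j x = zp_mult p (zp_inv p (zp_sqrt p \<beta> (x 1))) (Ql p n l j x)"

definition zp_unif_conv :: "int \<Rightarrow> (nat \<Rightarrow> 'a \<Rightarrow> nat \<Rightarrow> int) \<Rightarrow> ('a \<Rightarrow> nat \<Rightarrow> int) \<Rightarrow> 'a set \<Rightarrow> bool" where
  "zp_unif_conv p F f S = (\<forall>\<epsilon>>0. \<exists>N. \<forall>s\<ge>N. \<forall>x\<in>S. zp_abs p (zp_diff p (F s x) (f x)) < \<epsilon>)"

end

theory Submission
  imports Defs "HOL-Number_Theory.Number_Theory"
begin

text \<open>Fix a precision p^k; it suffices that J^{l,s} and omega(beta) J^l agree modulo p^k for
  all large s.  On the disc where p divides x_2, ..., x_{n-1}, a monomial of total degree at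
  least k vanishes modulo p^k, and the linear constraint on the multi-indices bounds every
  exponent by the total degree plus l.  So modulo p^k both Q^{l,s} and Q^l are the same finite
  sum over exponents at most k + l, and there the coefficients agree: binom(y, m) is a
  polynomial in y with denominator m!, and (p^s - 1)/2 - (-1/2) = p^s/2.  For the x_1 factor
  write x_1 = y^2 with y = beta mod p; then x_1^((p^s - 1)/2) = y^(p^s) / y, and
  y^(p^s) = beta^(p^s) = omega(beta) modulo p^(s+1).\<close>

section \<open>Residue sequences\<close>

lemma Zp_bounds: "x \<in> Zp p \<Longrightarrow> 0 \<le> x k \<and> x k < p ^ k"
  unfolding Zp_def by auto

lemma Zp_mod_power:
  assumes "x \<in> Zp p" "j \<le> k"
  shows "x k mod p ^ j = x j"
  using assms(2)
proof (induction k rule: dec_induct)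
  case base
  show ?case using Zp_bounds[OF assms(1)] by simp
next
  case (step k)
  have "x (Suc k) mod p ^ k = x k" using assms(1) unfolding Zp_def by auto
  then have "x (Suc k) mod p ^ j = x k mod p ^ j"
    by (metis mod_mod_cancel le_imp_power_dvd step.hyps(1))
  then show ?case using step.IH by simp
qed

lemma Zp_cong_level_one:
  assumes "x \<in> Zp p" "k \<ge> 1"
  shows "[x k = x 1] (mod p)"
  using Zp_mod_power[OF assms] Zp_bounds[OF assms(1), of 1] unfolding cong_def by simp

lemma Zp_eq_mod_power: "x \<in> Zp p \<Longrightarrow> x k mod p ^ k = x k"
  using Zp_bounds by simp

lemma ex1_Zp_levels:
  fixes p :: int
  assumes "p > 1"
    and ex: "\<And>k. \<exists>r. 0 \<le> r \<and> r < p ^ k \<and> P k r"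
    and unique: "\<And>k r r'. 0 \<le> r \<Longrightarrow> r < p ^ k \<Longrightarrow> P k r \<Longrightarrow>
                    0 \<le> r' \<Longrightarrow> r' < p ^ k \<Longrightarrow> P k r' \<Longrightarrow> r = r'"
    and compat: "\<And>k r. P (Suc k) r \<Longrightarrow> P k (r mod p ^ k)"
  shows "\<exists>!z. z \<in> Zp p \<and> (\<forall>k. P k (z k))"
proof -
  have "\<exists>!r. 0 \<le> r \<and> r < p ^ k \<and> P k r" for k
    using ex[of k] unique[of _ k] by blast
  then obtain z where z: "\<And>k. 0 \<le> z k \<and> z k < p ^ k \<and> P k (z k)"
    by metis
  have "z (Suc k) mod p ^ k = z k" for k
    using unique[of _ k] z[of k] z[of "Suc k"] compat \<open>p > 1\<close> by simp
  then have "z \<in> Zp p \<and> (\<forall>k. P k (z k))" using z unfolding Zp_def by auto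
  moreover have "y = z" if "y \<in> Zp p \<and> (\<forall>k. P k (y k))" for y
    using unique z Zp_bounds[of y p] that by blast
  ultimately show ?thesis by blast
qed

lemma zp_abs_le_if_levels_zero:
  fixes p :: int
  assumes "p > 1" "\<forall>k\<le>K. D k = 0"
  shows "zp_abs p D \<le> 1 / real_of_int p ^ K"
proof (cases "\<forall>k. D k = 0")
  case True
  then show ?thesis unfolding zp_abs_def using assms(1) by simp
next
  case False
  then obtain k where "D k \<noteq> 0" by blast
  with assms(2) obtain k' where "D (Suc k') \<noteq> 0" by (cases k) auto
  define L where "L = (LEAST k. D (Suc k) \<noteq> 0)"
  have "D (Suc L) \<noteq> 0" unfolding L_def by (rule LeastI[of _ k'], fact)
  then have "K \<le> L" using assms(2) by (meson not_less_eq_eq)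
  then have "real_of_int p ^ K \<le> real_of_int p ^ L" using assms(1) by (intro power_increasing) auto
  moreover have "zp_abs p D = 1 / real_of_int p ^ L" using False by (auto simp: zp_abs_def L_def)
  ultimately show ?thesis using assms(1) by (simp add: frac_le)
qed

lemma zp_unif_conv_levelwise:
  fixes p :: int
  assumes "p > 1" and levels: "\<And>k. \<forall>\<^sub>F s in sequentially. \<forall>x\<in>S. F s x k = f x k"
  shows "zp_unif_conv p F f S"
  unfolding zp_unif_conv_def
proof (intro allI impI)
  fix \<epsilon> :: real assume "\<epsilon> > 0"
  obtain K where "1 / \<epsilon> < real_of_int p ^ K"
    using real_arch_pow[of "real_of_int p" "1 / \<epsilon>"] \<open>p > 1\<close> by auto
  then have K: "1 / real_of_int p ^ K < \<epsilon>"
    using \<open>\<epsilon> > 0\<close> \<open>p > 1\<close> by (simp add: field_simps)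
  have "\<forall>\<^sub>F s in sequentially. \<forall>k\<in>{..K}. \<forall>x\<in>S. F s x k = f x k"
    by (rule eventually_ball_finite) (use levels in auto)
  then obtain N where N: "\<forall>s\<ge>N. \<forall>k\<in>{..K}. \<forall>x\<in>S. F s x k = f x k"
    unfolding eventually_sequentially by blast
  have "zp_abs p (zp_diff p (F s x) (f x)) < \<epsilon>" if "s \<ge> N" "x \<in> S" for s x
  proof -
    have "\<forall>k\<le>K. zp_diff p (F s x) (f x) k = 0"
      using N that unfolding zp_diff_def by simp
    then have "zp_abs p (zp_diff p (F s x) (f x)) \<le> 1 / real_of_int p ^ K"
      by (rule zp_abs_le_if_levels_zero[OF \<open>p > 1\<close>])
    then show ?thesis using K by linarith
  qed
  then show "\<exists>N. \<forall>s\<ge>N. \<forall>x\<in>S. zp_abs p (zp_diff p (F s x) (f x)) < \<epsilon>" by blast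
qed

section \<open>Teichmueller representatives and residue discs\<close>

lemma fermat_int:
  fixes p a :: int
  assumes "prime p"
  shows "[a ^ nat p = a] (mod p)"
proof -
  have p1: "p > 1" using assms prime_gt_1_int by blast
  define b where "b = nat (a mod p)"
  have ab: "[a = int b] (mod p)" using p1 unfolding b_def cong_def by simp
  have "[b ^ nat p = b] (mod nat p)"
  proof (cases "b = 0")
    case False
    have "b < nat p" using p1 unfolding b_def by auto
    then have "\<not> nat p dvd b" using False by (auto dest: dvd_imp_le)
    then have "[b ^ (nat p - 1) = 1] (mod nat p)"
      using fermat_theorem[of "nat p" b] assms by simp
    then have "[b ^ (nat p - 1) * b = 1 * b] (mod nat p)" by (rule cong_scalar_right)
    moreover have "Suc (nat p - 1) = nat p" using p1 by simp
    then have "b ^ (nat p - 1) * b = b ^ nat p" by (metis power_Suc2)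
    ultimately show ?thesis by simp
  qed (use p1 in \<open>simp add: power_0_left\<close>)
  then have "[int (b ^ nat p) = int b] (mod int (nat p))" by (simp only: cong_int_iff)
  then have "[int b ^ nat p = int b] (mod p)" using p1 by simp
  then show ?thesis using ab cong_pow[OF ab, of "nat p"] by (meson cong_trans cong_sym)
qed

text \<open>One more factor of p in the modulus per p-th power: if a = b + p^(j+1) c then
  a^p - b^p = (a - b) (a^(p-1) + ... + b^(p-1)) and the second factor is p b^(p-1) mod p.\<close>

lemma cong_pow_prime_Suc_modulus:
  fixes a b p :: int
  assumes "prime p" "[a = b] (mod p ^ Suc j)"
  shows "[a ^ nat p = b ^ nat p] (mod p ^ Suc (Suc j))"
proof -
  have p1: "p > 1" using assms prime_gt_1_int by blast
  define m where "m = nat p - 1"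
  have m: "nat p = Suc m" using p1 unfolding m_def by simp
  define S where "S = (\<Sum>i<Suc m. a ^ i * b ^ (m - i))"
  have diff: "a ^ nat p - b ^ nat p = (a - b) * S"
    unfolding m S_def by (rule diff_power_eq_sum)
  have ab: "[a = b] (mod p)" using assms(2) cong_dvd_modulus[of a b "p ^ Suc j" p] by simp
  have "[S = (\<Sum>i<Suc m. b ^ i * b ^ (m - i))] (mod p)"
    unfolding S_def by (intro cong_sum cong_scalar_right cong_pow ab)
  also have "(\<Sum>i<Suc m. b ^ i * b ^ (m - i)) = (\<Sum>i<Suc m. b ^ m)"
    by (rule sum.cong) (auto simp: power_add[symmetric])
  also have "\<dots> = int (Suc m) * b ^ m" by simp
  also have "int (Suc m) = p" using p1 by (simp flip: m)
  finally have "p dvd S" by (simp add: cong_dvd_iff)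
  moreover have "p ^ Suc j dvd a - b" using assms(2) cong_iff_dvd_diff by blast
  ultimately have "p ^ Suc j * p dvd (a - b) * S" by (simp add: mult_dvd_mono)
  then show ?thesis unfolding cong_iff_dvd_diff diff by (simp add: mult.commute)
qed

lemma cong_pow_prime_power:
  fixes a b p :: int
  assumes "prime p" "[a = b] (mod p)"
  shows "[a ^ (nat p ^ m) = b ^ (nat p ^ m)] (mod p ^ Suc m)"
proof (induction m)
  case 0
  then show ?case using assms(2) by simp
next
  case (Suc m)
  from cong_pow_prime_Suc_modulus[OF assms(1) Suc]
  show ?case by (simp add: power_mult[symmetric] mult.commute)
qed

definition teich_seq :: "int \<Rightarrow> int \<Rightarrow> nat \<Rightarrow> int" where
  "teich_seq p t = (\<lambda>k. t ^ (nat p ^ k) mod p ^ k)"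

lemma cong_pow_prime_power_mono:
  fixes p t :: int
  assumes "prime p" "k \<le> s"
  shows "[t ^ (nat p ^ s) = t ^ (nat p ^ k)] (mod p ^ Suc k)"
  using assms(2)
proof (induction s rule: dec_induct)
  case (step s)
  have "[(t ^ nat p) ^ (nat p ^ s) = t ^ (nat p ^ s)] (mod p ^ Suc s)"
    by (rule cong_pow_prime_power[OF assms(1) fermat_int[OF assms(1)]])
  then have "[t ^ (nat p ^ Suc s) = t ^ (nat p ^ s)] (mod p ^ Suc s)"
    by (simp add: power_mult[symmetric] mult.commute)
  then have "[t ^ (nat p ^ Suc s) = t ^ (nat p ^ s)] (mod p ^ Suc k)"
    by (rule cong_dvd_modulus) (simp add: le_imp_power_dvd step.hyps)
  then show ?case using step.IH by (meson cong_trans)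
qed simp

lemma teich_seq_Teichmueller:
  fixes p t :: int
  assumes "prime p"
  shows "teich_seq p t \<in> Zp p" "zp_pow p (teich_seq p t) (nat p) = teich_seq p t"
    "teich_seq p t 1 = t mod p"
proof -
  have p1: "p > 1" using assms prime_gt_1_int by blast
  have step: "[t ^ (nat p ^ Suc k) = t ^ (nat p ^ k)] (mod p ^ k)" for k
  proof -
    have "[t ^ (nat p ^ Suc k) = t ^ (nat p ^ k)] (mod p ^ Suc k)"
      using cong_pow_prime_power_mono[OF assms, of k "Suc k"] by simp
    then show ?thesis by (rule cong_dvd_modulus) (simp add: le_imp_power_dvd)
  qed
  have "teich_seq p t (Suc k) mod p ^ k = teich_seq p t k" for k
    using step[of k] unfolding teich_seq_def cong_def
    by (simp add: mod_mod_cancel le_imp_power_dvd)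
  then show "teich_seq p t \<in> Zp p" using p1 unfolding Zp_def teich_seq_def by auto
  have "zp_pow p (teich_seq p t) (nat p) k = teich_seq p t k" for k
  proof -
    have "(t ^ (nat p ^ k) mod p ^ k) ^ nat p mod p ^ k = t ^ (nat p ^ Suc k) mod p ^ k"
      by (simp add: power_mod power_mult[symmetric] mult.commute)
    then show ?thesis using step[of k] unfolding zp_pow_def teich_seq_def cong_def by simp
  qed
  then show "zp_pow p (teich_seq p t) (nat p) = teich_seq p t" by blast
  show "teich_seq p t 1 = t mod p"
    using fermat_int[OF assms, of t] unfolding teich_seq_def cong_def by simp
qed

lemma Teichmueller_unique:
  fixes p t :: int
  assumes "prime p" "w \<in> Zp p" "zp_pow p w (nat p) = w" "w 1 = t mod p"
  shows "w = teich_seq p t"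
proof
  fix k
  show "w k = teich_seq p t k"
  proof (cases "k = 0")
    case True
    then show ?thesis using Zp_bounds[OF assms(2), of 0] unfolding teich_seq_def by simp
  next
    case False
    have "[w k ^ nat p = w k] (mod p ^ k)"
      using fun_cong[OF assms(3), of k] Zp_eq_mod_power[OF assms(2)]
      unfolding zp_pow_def cong_def by simp
    then have fixed: "[w k ^ (nat p ^ m) = w k] (mod p ^ k)" for m
    proof (induction m)
      case (Suc m)
      then have "[(w k ^ (nat p ^ m)) ^ nat p = w k ^ nat p] (mod p ^ k)" by (simp add: cong_pow)
      then show ?case using Suc.prems by (simp add: power_mult[symmetric] mult.commute cong_trans)
    qed simp
    have "[w k = t] (mod p)"
      using Zp_cong_level_one[OF assms(2)] False assms(4) unfolding cong_def by simp
    then have "[w k ^ (nat p ^ k) = t ^ (nat p ^ k)] (mod p ^ k)"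
      by (rule cong_dvd_modulus[OF cong_pow_prime_power[OF assms(1)]]) (simp add: le_imp_power_dvd)
    then have "[w k = t ^ (nat p ^ k)] (mod p ^ k)" using fixed by (meson cong_sym cong_trans)
    then show ?thesis unfolding teich_seq_def cong_def using Zp_eq_mod_power[OF assms(2)] by simp
  qed
qed

lemma teich_eq_teich_seq:
  fixes p t :: int
  assumes "prime p"
  shows "teich p t = teich_seq p t"
  unfolding teich_def
  by (rule the_equality) (use teich_seq_Teichmueller[OF assms] Teichmueller_unique[OF assms] in auto)

lemma mem_Ddisc_iff:
  fixes p t :: int
  assumes "prime p"
  shows "x \<in> Ddisc p t \<longleftrightarrow> x \<in> Zp p \<and> x 1 = t mod p"
proof -
  have p1: "p > 1" using assms prime_gt_1_int by blast
  define D where "D = zp_diff p x (teich p t)"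
  have D1: "D 1 = (x 1 - t mod p) mod p"
    using teich_seq_Teichmueller(3)[OF assms] unfolding D_def zp_diff_def teich_eq_teich_seq[OF assms]
    by simp
  have D0: "D 0 = 0" unfolding D_def zp_diff_def by simp
  have "zp_abs p D < 1 \<longleftrightarrow> D 1 = 0"
  proof
    assume "zp_abs p D < 1"
    show "D 1 = 0"
    proof (rule ccontr)
      assume "D 1 \<noteq> 0"
      then have "(LEAST k. D (Suc k) \<noteq> 0) = 0" "\<not> (\<forall>k. D k = 0)" by (auto simp: Least_eq_0)
      then have "zp_abs p D = 1" unfolding zp_abs_def by simp
      with \<open>zp_abs p D < 1\<close> show False by simp
    qed
  next
    assume "D 1 = 0"
    then have "\<forall>k\<le>1. D k = 0" using D0 by (auto simp: le_Suc_eq)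
    then have "zp_abs p D \<le> 1 / real_of_int p" using zp_abs_le_if_levels_zero[OF p1, of 1] by simp
    also have "\<dots> < 1" using p1 by simp
    finally show "zp_abs p D < 1" .
  qed
  moreover have "D 1 = 0 \<longleftrightarrow> x 1 = t mod p" if "x \<in> Zp p"
  proof -
    have "D 1 = 0 \<longleftrightarrow> [x 1 = t mod p] (mod p)"
      unfolding D1 cong_iff_dvd_diff by (simp add: dvd_eq_mod_eq_0)
    also have "\<dots> \<longleftrightarrow> x 1 = t mod p" using Zp_bounds[OF that, of 1] unfolding cong_def by auto
    finally show ?thesis .
  qed
  ultimately show ?thesis unfolding Ddisc_def D_def by auto
qed

section \<open>Square roots and inverses in residue sequences\<close>

lemma odd_prime_not_dvd_two:
  fixes p :: int
  assumes "prime p" "odd p"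
  shows "\<not> p dvd 2"
  using assms prime_ge_2_int zdvd_imp_le[of p 2] by (metis dvd_refl order_antisym zero_less_numeral)

lemma hensel_sqrt_int:
  fixes p \<beta> X :: int
  assumes "prime p" "odd p" "\<not> p dvd \<beta>" "[X = \<beta>^2] (mod p)"
  shows "\<exists>r. [r = \<beta>] (mod p) \<and> [r * r = X] (mod p ^ Suc k)"
proof (induction k)
  case 0
  have "[\<beta> * \<beta> = X] (mod p)" using assms(4) by (simp add: power2_eq_square cong_sym)
  then show ?case by (intro exI[of _ \<beta>]) simp
next
  case (Suc k)
  then obtain r where r1: "[r = \<beta>] (mod p)" and r2: "[r * r = X] (mod p ^ Suc k)" by blast
  define P where "P = p ^ Suc k"
  obtain c where c: "r * r - X = P * c" using r2 unfolding P_def cong_iff_dvd_diff dvd_def by blast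
  have "\<not> p dvd r" using r1 assms(3) cong_dvd_iff by blast
  then have "\<not> p dvd 2 * r" using odd_prime_not_dvd_two[OF assms(1,2)] assms(1) prime_dvd_mult_iff by blast
  then have "coprime (2 * r) p" using assms(1) prime_imp_coprime coprime_commute by blast
  then obtain u where "[2 * r * u = 1] (mod p)" using cong_solve_coprime_int by blast
  then obtain e where e: "2 * r * u - 1 = p * e" unfolding cong_iff_dvd_diff dvd_def by blast
  \<comment> \<open>Newton step r' = r - (r^2 - X)/(2r), with u standing in for 1/(2r)\<close>
  define r' where "r' = r - P * c * u"
  have "r' * r' - X = P * p * (p ^ k * c^2 * u^2 - c * e)"
  proof -
    have "r' * r' - X = P * c * (1 - 2 * r * u) + P * P * c^2 * u^2"
      unfolding r'_def using c by (simp add: algebra_simps power2_eq_square)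
    also have "1 - 2 * r * u = - (p * e)" using e by simp
    also have "P * c * - (p * e) + P * P * c^2 * u^2 = P * p * (p ^ k * c^2 * u^2 - c * e)"
      unfolding P_def by (simp add: algebra_simps)
    finally show ?thesis .
  qed
  then have "[r' * r' = X] (mod p ^ Suc (Suc k))"
    unfolding cong_iff_dvd_diff P_def by (simp add: mult.commute)
  moreover have "[r' = r] (mod p)" unfolding r'_def P_def cong_iff_dvd_diff by simp
  then have "[r' = \<beta>] (mod p)" using r1 by (rule cong_trans)
  ultimately show ?case by blast
qed

definition is_sqrt_level :: "int \<Rightarrow> int \<Rightarrow> (nat \<Rightarrow> int) \<Rightarrow> nat \<Rightarrow> int \<Rightarrow> bool" where
  "is_sqrt_level p \<beta> x k r \<longleftrightarrow> (k = 0 \<or> [r = \<beta>] (mod p)) \<and> (r * r) mod p ^ k = x k"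

lemma is_sqrt_level_exists:
  fixes p \<beta> :: int
  assumes "prime p" "odd p" "\<not> p dvd \<beta>" "x \<in> Zp p" "x 1 = \<beta>^2 mod p"
  shows "\<exists>r. 0 \<le> r \<and> r < p ^ k \<and> is_sqrt_level p \<beta> x k r"
proof (cases k)
  case 0
  then show ?thesis using Zp_bounds[OF assms(4), of 0] unfolding is_sqrt_level_def by auto
next
  case (Suc k')
  have "[x k = \<beta>^2] (mod p)"
    using Zp_cong_level_one[OF assms(4)] assms(5) Suc unfolding cong_def by simp
  then obtain r0 where r0: "[r0 = \<beta>] (mod p)" "[r0 * r0 = x k] (mod p ^ k)"
    using hensel_sqrt_int[OF assms(1-3)] Suc by blast
  define r where "r = r0 mod p ^ k"
  have "[r = r0] (mod p)"
    using cong_dvd_modulus[of r r0 "p ^ k" p] Suc unfolding r_def by simp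
  then have "[r = \<beta>] (mod p)" using r0(1) by (rule cong_trans)
  moreover have "(r * r) mod p ^ k = x k"
    using r0(2) Zp_eq_mod_power[OF assms(4)] unfolding r_def cong_def by (simp add: mod_mult_eq)
  moreover have "0 \<le> r \<and> r < p ^ k" unfolding r_def using prime_gt_1_int[OF assms(1)] by simp
  ultimately show ?thesis unfolding is_sqrt_level_def by blast
qed

lemma is_sqrt_level_unique:
  fixes p \<beta> :: int
  assumes "prime p" "odd p" "\<not> p dvd \<beta>"
    and r: "0 \<le> r" "r < p ^ k" "is_sqrt_level p \<beta> x k r"
    and r': "0 \<le> r'" "r' < p ^ k" "is_sqrt_level p \<beta> x k r'"
  shows "r = r'"
proof (cases "k = 0")
  case True
  then show ?thesis using r r' by simp
next
  case False
  \<comment> \<open>r + r' is congruent to the unit 2 beta, so p^k divides r - r'\<close>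
  have "[r + r' = 2 * \<beta>] (mod p)" using r r' False cong_add unfolding is_sqrt_level_def by fastforce
  moreover have "\<not> p dvd 2 * \<beta>"
    using odd_prime_not_dvd_two[OF assms(1,2)] assms(1,3) prime_dvd_mult_iff by blast
  ultimately have "coprime (p ^ k) (r + r')"
    using assms(1) cong_dvd_iff prime_imp_coprime coprime_power_left_iff by blast
  moreover have "[r * r = r' * r'] (mod p ^ k)" using r r' unfolding is_sqrt_level_def cong_def by simp
  then have "p ^ k dvd (r - r') * (r + r')" unfolding cong_iff_dvd_diff by (simp add: algebra_simps)
  ultimately have "[r = r'] (mod p ^ k)"
    unfolding cong_iff_dvd_diff using coprime_dvd_mult_left_iff by blast
  then show ?thesis using r r' cong_less_imp_eq_int by blast
qed

lemma is_sqrt_level_mod: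
  assumes "x \<in> Zp p" "is_sqrt_level p \<beta> x (Suc k) r"
  shows "is_sqrt_level p \<beta> x k (r mod p ^ k)"
proof -
  have "k = 0 \<or> [r mod p ^ k = \<beta>] (mod p)"
  proof (cases "k = 0")
    case False
    then have "[r mod p ^ k = r] (mod p)" using cong_dvd_modulus[of "r mod p ^ k" r "p ^ k" p] by simp
    then show ?thesis using assms(2) cong_trans unfolding is_sqrt_level_def by blast
  qed simp
  moreover have "((r mod p ^ k) * (r mod p ^ k)) mod p ^ k = ((r * r) mod p ^ Suc k) mod p ^ k"
    by (simp add: mod_mult_eq mod_mod_cancel le_imp_power_dvd)
  moreover have "((r * r) mod p ^ Suc k) mod p ^ k = x k"
    using assms unfolding is_sqrt_level_def Zp_def by simp
  ultimately show ?thesis unfolding is_sqrt_level_def by simp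
qed

lemma ex1_Zp_sqrt:
  fixes p \<beta> :: int
  assumes "prime p" "odd p" "\<not> p dvd \<beta>" "x \<in> Zp p" "x 1 = \<beta>^2 mod p"
  shows "\<exists>!z. z \<in> Zp p \<and> (\<forall>k. is_sqrt_level p \<beta> x k (z k))"
  using prime_gt_1_int[OF assms(1)] is_sqrt_level_exists[OF assms]
    is_sqrt_level_unique[OF assms(1-3)] is_sqrt_level_mod[OF assms(4)]
  by (rule ex1_Zp_levels)

lemma zp_sqrt_levels:
  fixes p \<beta> :: int
  assumes "prime p" "odd p" "\<not> p dvd \<beta>" "x \<in> Ddisc p (\<beta>^2)"
  shows "zp_sqrt p \<beta> x \<in> Zp p" "is_sqrt_level p \<beta> x k (zp_sqrt p \<beta> x k)"
proof -
  have x: "x \<in> Zp p" "x 1 = \<beta>^2 mod p" using assms(4) mem_Ddisc_iff[OF assms(1)] by auto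
  have "y \<in> Ddisc p \<beta> \<and> zp_mult p y y = x \<longleftrightarrow>
      y \<in> Zp p \<and> (\<forall>k. is_sqrt_level p \<beta> x k (y k))" for y
  proof (cases "y \<in> Zp p")
    case True
    have "y 1 = \<beta> mod p \<longleftrightarrow> (\<forall>k. k = 0 \<or> [y k = \<beta>] (mod p))"
    proof
      assume "y 1 = \<beta> mod p"
      then show "\<forall>k. k = 0 \<or> [y k = \<beta>] (mod p)"
        using Zp_cong_level_one[OF True] by (auto simp: cong_def Suc_le_eq)
    next
      assume "\<forall>k. k = 0 \<or> [y k = \<beta>] (mod p)"
      then have "[y 1 = \<beta>] (mod p)" by auto
      then show "y 1 = \<beta> mod p" using Zp_bounds[OF True, of 1] unfolding cong_def by simp
    qed
    moreover have "zp_mult p y y = x \<longleftrightarrow> (\<forall>k. (y k * y k) mod p ^ k = x k)"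
      unfolding zp_mult_def fun_eq_iff by simp
    ultimately show ?thesis
      unfolding mem_Ddisc_iff[OF assms(1)] is_sqrt_level_def using True by blast
  qed (simp add: mem_Ddisc_iff[OF assms(1)])
  moreover have "\<exists>!z. z \<in> Zp p \<and> (\<forall>k. is_sqrt_level p \<beta> x k (z k))"
    by (rule ex1_Zp_sqrt[OF assms(1-3) x])
  ultimately have "zp_sqrt p \<beta> x \<in> Zp p \<and> (\<forall>k. is_sqrt_level p \<beta> x k (zp_sqrt p \<beta> x k))"
    unfolding zp_sqrt_def using theI'[of "\<lambda>y. y \<in> Ddisc p \<beta> \<and> zp_mult p y y = x"] by simp
  then show "zp_sqrt p \<beta> x \<in> Zp p" "is_sqrt_level p \<beta> x k (zp_sqrt p \<beta> x k)" by auto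
qed

lemma zp_inv_levels:
  fixes p :: int
  assumes "prime p" "y \<in> Zp p" "\<And>k. k \<noteq> 0 \<Longrightarrow> \<not> p dvd y k"
  shows "zp_inv p y \<in> Zp p" "[y k * zp_inv p y k = 1] (mod p ^ k)"
proof -
  have p1: "p > 1" using assms prime_gt_1_int by blast
  define is_inv where "is_inv k r \<longleftrightarrow> (y k * r) mod p ^ k = 1 mod p ^ k" for k r
  have cop: "coprime (y k) (p ^ k)" for k
  proof (cases "k = 0")
    case False
    then show ?thesis using assms(1,3) prime_imp_coprime[of p "y k"] by (simp add: coprime_commute)
  qed simp
  have "\<exists>!z. z \<in> Zp p \<and> (\<forall>k. is_inv k (z k))"
  proof (rule ex1_Zp_levels[OF p1])
    fix k
    obtain u where "[y k * u = 1] (mod p ^ k)" using cong_solve_coprime_int cop by blast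
    then have "is_inv k (u mod p ^ k)" unfolding is_inv_def cong_def by (simp add: mod_mult_right_eq)
    then show "\<exists>r. 0 \<le> r \<and> r < p ^ k \<and> is_inv k r" using p1 by (intro exI[of _ "u mod p ^ k"]) simp
  next
    fix k r r'
    assume a: "0 \<le> r" "r < p ^ k" "is_inv k r" "0 \<le> r'" "r' < p ^ k" "is_inv k r'"
    then have "[y k * r = y k * r'] (mod p ^ k)" unfolding is_inv_def cong_def by simp
    then have "[r = r'] (mod p ^ k)" using cong_mult_lcancel cop by blast
    then show "r = r'" using a cong_less_imp_eq_int by blast
  next
    fix k r
    assume "is_inv (Suc k) r"
    moreover have "y k = y (Suc k) mod p ^ k" using assms(2) unfolding Zp_def by simp
    ultimately show "is_inv k (r mod p ^ k)" unfolding is_inv_def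
      by (metis le_imp_power_dvd le_SucI order_refl mod_mod_cancel mod_mult_eq mod_mod_trivial)
  qed
  moreover have "z \<in> Zp p \<and> zp_mult p y z = zp_of_int p 1 \<longleftrightarrow>
      z \<in> Zp p \<and> (\<forall>k. is_inv k (z k))" for z
    unfolding zp_mult_def zp_of_int_def is_inv_def fun_eq_iff by simp
  ultimately have "zp_inv p y \<in> Zp p \<and> (\<forall>k. is_inv k (zp_inv p y k))"
    unfolding zp_inv_def using theI'[of "\<lambda>z. z \<in> Zp p \<and> zp_mult p y z = zp_of_int p 1"] by simp
  then show "zp_inv p y \<in> Zp p" "[y k * zp_inv p y k = 1] (mod p ^ k)"
    unfolding is_inv_def cong_def by auto
qed

lemma cong_pow_half_teich:
  fixes p \<beta> x y z :: int and N :: nat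
  assumes "prime p" "k \<le> s" "2 * N + 1 = nat p ^ s"
    and "[y = \<beta>] (mod p)" "[y * z = 1] (mod p ^ k)" "[x = y * y] (mod p ^ k)"
  shows "[x ^ N = \<beta> ^ (nat p ^ k) * z] (mod p ^ k)"
proof -
  have "[y ^ (nat p ^ s) = \<beta> ^ (nat p ^ s)] (mod p ^ k)"
    using cong_pow_prime_power[OF assms(1,4), of s]
    by (rule cong_dvd_modulus) (simp add: le_imp_power_dvd assms(2) le_SucI)
  also have "[\<beta> ^ (nat p ^ s) = \<beta> ^ (nat p ^ k)] (mod p ^ k)"
    using cong_pow_prime_power_mono[OF assms(1,2)]
    by (rule cong_dvd_modulus) (simp add: le_imp_power_dvd)
  finally have "[y ^ (2 * N) * y = \<beta> ^ (nat p ^ k)] (mod p ^ k)"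
    by (simp flip: assms(3) power_Suc2)
  then have "[y ^ (2 * N) * (y * z) = \<beta> ^ (nat p ^ k) * z] (mod p ^ k)"
    by (metis cong_scalar_right mult.assoc)
  moreover have "[y ^ (2 * N) * (y * z) = y ^ (2 * N)] (mod p ^ k)"
    using cong_scalar_left[OF assms(5), of "y ^ (2 * N)"] by simp
  moreover have "[x ^ N = y ^ (2 * N)] (mod p ^ k)"
    using cong_pow[OF assms(6), of N] by (simp add: power_mult power2_eq_square)
  ultimately show ?thesis by (meson cong_sym cong_trans)
qed

section \<open>Rationals without p in the denominator\<close>

definition p_integral :: "int \<Rightarrow> rat \<Rightarrow> bool" where
  "p_integral p r \<longleftrightarrow> (\<exists>a b. b \<noteq> 0 \<and> coprime b p \<and> r = of_int a / of_int b)"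

lemma p_integral_of_int [simp]: "p_integral p (of_int a)"
  unfolding p_integral_def by (rule exI[of _ a], rule exI[of _ 1]) simp

lemma p_integral_0 [simp]: "p_integral p 0"
  using p_integral_of_int[of p 0] by simp

lemma p_integral_1 [simp]: "p_integral p 1"
  using p_integral_of_int[of p 1] by simp

lemma p_integral_of_nat [simp]: "p_integral p (of_nat a)"
  using p_integral_of_int[of p "int a"] by simp

lemma p_integral_add [simp]:
  assumes "p_integral p r" "p_integral p s"
  shows "p_integral p (r + s)"
proof -
  obtain a b c d where "b \<noteq> 0" "coprime b p" "r = of_int a / of_int b"
    "d \<noteq> 0" "coprime d p" "s = of_int c / of_int d"
    using assms unfolding p_integral_def by blast
  then have "r + s = of_int (a * d + c * b) / of_int (b * d)" "b * d \<noteq> 0" "coprime (b * d) p"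
    by (simp_all add: field_simps)
  then show ?thesis unfolding p_integral_def by blast
qed

lemma p_integral_mult [simp]:
  assumes "p_integral p r" "p_integral p s"
  shows "p_integral p (r * s)"
proof -
  obtain a b c d where "b \<noteq> 0" "coprime b p" "r = of_int a / of_int b"
    "d \<noteq> 0" "coprime d p" "s = of_int c / of_int d"
    using assms unfolding p_integral_def by blast
  then have "r * s = of_int (a * c) / of_int (b * d)" "b * d \<noteq> 0" "coprime (b * d) p"
    by simp_all
  then show ?thesis unfolding p_integral_def by blast
qed

lemma p_integral_minus [simp]: "p_integral p r \<Longrightarrow> p_integral p (- r)"
  using p_integral_mult[OF p_integral_of_int[of p "-1"]] by simp

lemma p_integral_diff [simp]: "p_integral p r \<Longrightarrow> p_integral p s \<Longrightarrow> p_integral p (r - s)"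
  using p_integral_add[of p r "- s"] by simp

lemma p_integral_power [simp]: "p_integral p r \<Longrightarrow> p_integral p (r ^ n)"
  by (induction n) simp_all

lemma p_integral_gbinomial_of_nat [simp]: "p_integral p (of_nat L gchoose m)"
  by (simp flip: binomial_gbinomial)

lemma p_integral_prod:
  "(\<And>i. i \<in> I \<Longrightarrow> p_integral p (f i)) \<Longrightarrow> p_integral p (\<Prod>i\<in>I. f i)"
  by (induction I rule: infinite_finite_induct) (auto intro: p_integral_mult)

lemma p_integral_divide_coprime:
  fixes u :: int
  assumes "p_integral p r" "u \<noteq> 0" "coprime u p"
  shows "p_integral p (r / of_int u)"
proof -
  have "p_integral p (1 / of_int u)"
    unfolding p_integral_def using assms(2,3) by (intro exI[of _ 1] exI[of _ u]) simp
  then show ?thesis using assms(1) p_integral_mult by fastforce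
qed

lemma p_integral_half:
  fixes p :: int
  assumes "prime p" "odd p"
  shows "p_integral p (1 / 2)"
proof -
  have "coprime 2 p"
    using odd_prime_not_dvd_two[OF assms] assms(1) prime_imp_coprime coprime_commute by blast
  then show ?thesis using p_integral_divide_coprime[of p 1 2] by simp
qed

lemma ex1_cong_mult_solution:
  fixes m D N :: int
  assumes "m > 0" "coprime D m"
  shows "\<exists>!c. 0 \<le> c \<and> c < m \<and> [c * D = N] (mod m)"
proof -
  obtain v where v: "[D * v = 1] (mod m)" using cong_solve_coprime_int[OF assms(2)] by blast
  have "[(N * v) mod m * D = N * (D * v)] (mod m)"
    by (simp add: cong_def mod_mult_left_eq mod_mult_right_eq ac_simps)
  also have "[N * (D * v) = N * 1] (mod m)" using v by (rule cong_scalar_left)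
  finally have "0 \<le> (N * v) mod m \<and> (N * v) mod m < m \<and> [(N * v) mod m * D = N] (mod m)"
    using assms(1) by simp
  moreover have "c = c'" if "0 \<le> c \<and> c < m \<and> [c * D = N] (mod m)"
    "0 \<le> c' \<and> c' < m \<and> [c' * D = N] (mod m)" for c c'
  proof -
    have "[c = c'] (mod m)"
      using that cong_mult_rcancel[OF assms(2)] by (meson cong_sym cong_trans)
    then show "c = c'" using that cong_less_imp_eq_int by blast
  qed
  ultimately show ?thesis by blast
qed

lemma zp_of_rat_level:
  fixes p a b :: int
  assumes "prime p" "b \<noteq> 0" "coprime b p" "r = of_int a / of_int b"
  shows "0 \<le> zp_of_rat p r k \<and> zp_of_rat p r k < p ^ k \<and> [zp_of_rat p r k * b = a] (mod p ^ k)"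
proof -
  obtain N D where q: "quotient_of r = (N, D)" by (cases "quotient_of r") auto
  have "of_int N / of_int D = (of_int a / of_int b :: rat)"
    using quotient_of_div[OF q] assms(4) by simp
  then have Nb: "N * b = a * D"
    using quotient_of_denom_pos[OF q] assms(2) by (simp add: frac_eq_eq flip: of_int_mult)
  then have "D dvd b"
    using quotient_of_coprime[OF q] by (metis coprime_commute coprime_dvd_mult_right_iff dvd_triv_right)
  then have "coprime D p" using assms(3) coprime_imp_coprime dvd_trans by blast
  then have cD: "coprime D (p ^ k)" by simp
  define C where "C = zp_of_rat p r k"
  have "0 \<le> C \<and> C < p ^ k \<and> [C * D = N] (mod p ^ k)"
    unfolding C_def zp_of_rat_def q
    using theI'[OF ex1_cong_mult_solution[OF _ cD]] prime_gt_1_int[OF assms(1)] by simp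
  moreover from this have "[C * b * D = a * D] (mod p ^ k)"
    using Nb cong_scalar_right[of "C * D" N "p ^ k" b] by (simp add: ac_simps)
  ultimately show ?thesis unfolding C_def using cong_mult_rcancel[OF cD] by blast
qed

definition rat_cong :: "int \<Rightarrow> nat \<Rightarrow> rat \<Rightarrow> rat \<Rightarrow> bool" where
  "rat_cong p k r r' \<longleftrightarrow> (\<exists>q. p_integral p q \<and> r = r' + of_int (p ^ k) * q)"

lemma zp_of_rat_eq_if_rat_cong:
  fixes p :: int
  assumes "prime p" "p_integral p r'" "rat_cong p k r r'"
  shows "zp_of_rat p r k = zp_of_rat p r' k"
proof -
  obtain a b where ab: "b \<noteq> 0" "coprime b p" "r' = of_int a / of_int b"
    using assms(2) unfolding p_integral_def by blast
  obtain c d q where cd: "d \<noteq> 0" "coprime d p" "q = of_int c / of_int d"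
    and r: "r = r' + of_int (p ^ k) * q"
    using assms(3) unfolding rat_cong_def p_integral_def by blast
  have "r = of_int (a * d + p ^ k * c * b) / of_int (b * d)"
    unfolding r ab(3) cd(3) using ab(1) cd(1) by (simp add: field_simps)
  then have C: "0 \<le> zp_of_rat p r k \<and> zp_of_rat p r k < p ^ k
      \<and> [zp_of_rat p r k * (b * d) = a * d + p ^ k * c * b] (mod p ^ k)"
    using ab cd by (intro zp_of_rat_level[OF assms(1)]) auto
  have C': "0 \<le> zp_of_rat p r' k \<and> zp_of_rat p r' k < p ^ k \<and> [zp_of_rat p r' k * b = a] (mod p ^ k)"
    by (rule zp_of_rat_level[OF assms(1) ab])
  have "[a * d + p ^ k * c * b = a * d] (mod p ^ k)" unfolding cong_iff_dvd_diff by simp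
  moreover have "[zp_of_rat p r' k * b * d = a * d] (mod p ^ k)" using C' cong_scalar_right by blast
  ultimately have "[zp_of_rat p r k * (b * d) = zp_of_rat p r' k * (b * d)] (mod p ^ k)"
    using C by (metis cong_sym cong_trans mult.assoc)
  moreover have "coprime (b * d) (p ^ k)" using ab cd by simp
  ultimately have "[zp_of_rat p r k = zp_of_rat p r' k] (mod p ^ k)" using cong_mult_rcancel by blast
  then show ?thesis using C C' cong_less_imp_eq_int by blast
qed

lemma rat_cong_p_integral:
  assumes "rat_cong p k r r'" "p_integral p r"
  shows "p_integral p r'"
proof -
  obtain q where "p_integral p q" "r' = r - of_int (p ^ k) * q"
    using assms(1) unfolding rat_cong_def by force
  then show ?thesis using assms(2) by simp
qed

lemma rat_cong_mult:
  assumes "rat_cong p k r r'" "rat_cong p k s s'" "p_integral p r" "p_integral p s"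
  shows "rat_cong p k (r * s) (r' * s')"
proof -
  obtain q q' where q: "p_integral p q" "r = r' + of_int (p ^ k) * q"
    and q': "p_integral p q'" "s = s' + of_int (p ^ k) * q'"
    using assms(1,2) unfolding rat_cong_def by blast
  have "p_integral p r'" "p_integral p s'" using rat_cong_p_integral assms by blast+
  then have "p_integral p (q * s' + r' * q' + of_int (p ^ k) * q * q')"
    using q(1) q'(1) by simp
  moreover have "r * s = r' * s' + of_int (p ^ k) * (q * s' + r' * q' + of_int (p ^ k) * q * q')"
    unfolding q q' by (simp add: algebra_simps)
  ultimately show ?thesis unfolding rat_cong_def by blast
qed

lemma rat_cong_prod:
  "finite I \<Longrightarrow> (\<And>i. i \<in> I \<Longrightarrow> rat_cong p k (f i) (g i) \<and> p_integral p (f i))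
    \<Longrightarrow> rat_cong p k (\<Prod>i\<in>I. f i) (\<Prod>i\<in>I. g i)"
proof (induction I rule: finite_induct)
  case empty
  then show ?case unfolding rat_cong_def by (intro exI[of _ 0]) simp
next
  case (insert x F)
  then show ?case by (simp add: rat_cong_mult p_integral_prod)
qed

lemma prod_minus_of_nat_diff:
  assumes "p_integral p a" "p_integral p b"
  shows "\<exists>W. p_integral p W \<and> (\<Prod>i<m. a - of_nat i) = (\<Prod>i<m. b - of_nat i) + (a - b) * W"
proof (induction m)
  case 0
  then show ?case by (intro exI[of _ 0]) simp
next
  case (Suc m)
  then obtain W where W: "p_integral p W" "(\<Prod>i<m. a - of_nat i) = (\<Prod>i<m. b - of_nat i) + (a - b) * W"
    by blast
  define B where "B = (\<Prod>i<m. b - of_nat i)"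
  have "p_integral p B" unfolding B_def using assms(2) by (intro p_integral_prod p_integral_diff) simp_all
  then have "p_integral p (B + W * (a - of_nat m))"
    using W(1) assms(1) by simp
  moreover have "(\<Prod>i<Suc m. a - of_nat i) = (\<Prod>i<Suc m. b - of_nat i) + (a - b) * (B + W * (a - of_nat m))"
    unfolding prod.lessThan_Suc W(2) B_def[symmetric] by (simp add: algebra_simps)
  ultimately show ?case by blast
qed

text \<open>(y choose m) is a polynomial in y with denominator m!, so moving y by p^s w moves it by
  p^(s - v_p(m!)) times a p-integral number.\<close>

lemma gbinomial_rat_cong:
  fixes p :: int and a b w :: rat
  assumes "prime p" "p_integral p a" "p_integral p b" "p_integral p w" "a - b = of_int (p ^ s) * w"
    "m \<le> M" "k + multiplicity p (fact M :: int) \<le> s"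
  shows "rat_cong p k (a gchoose m) (b gchoose m)"
proof -
  define V where "V = multiplicity p (fact M :: int)"
  have "\<not> is_unit p" using assms(1) prime_gt_1_int by force
  then obtain u where u: "(fact M :: int) = p ^ V * u" "\<not> p dvd u"
    using multiplicity_decompose'[of "fact M :: int" p] unfolding V_def by auto
  then have u0: "u \<noteq> 0" and cu: "coprime u p"
    using assms(1) by (auto simp: prime_imp_coprime coprime_commute)
  obtain W where W: "p_integral p W" "(\<Prod>i<m. a - of_nat i) = (\<Prod>i<m. b - of_nat i) + (a - b) * W"
    using prod_minus_of_nat_diff[OF assms(2,3)] by blast
  obtain Z :: nat where Z: "fact M = fact m * Z" using fact_dvd[OF assms(6)] by (auto elim: dvdE)
  have pV: "of_int (p ^ V) * of_int u = (fact m * of_nat Z :: rat)"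
  proof -
    have "of_int (p ^ V) * of_int u = (of_int (fact M :: int) :: rat)" by (simp only: u(1) of_int_mult)
    also have "\<dots> = fact m * of_nat Z" using arg_cong[OF Z, of "of_nat :: nat \<Rightarrow> rat"] by simp
    finally show ?thesis .
  qed
  define q where "q = of_int (p ^ (s - k - V)) * w * W * of_nat Z / of_int u"
  have "p_integral p q"
    unfolding q_def using assms(4) W(1) u0 cu by (intro p_integral_divide_coprime) simp_all
  moreover have "(a - b) * W / fact m = of_int (p ^ k) * q"
  proof -
    have ps: "p ^ s = p ^ k * p ^ (s - k - V) * p ^ V"
      using assms(7) unfolding V_def by (simp flip: power_add)
    have "Z \<noteq> 0" using Z by (metis fact_nonzero mult_0_right)
    then have "(a - b) * W / fact m = (a - b) * W * of_nat Z / (of_int (p ^ V) * of_int u)"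
      using pV by (simp add: field_simps)
    also have "\<dots> = of_int (p ^ k) * q"
      unfolding assms(5) q_def ps using u0 prime_gt_1_int[OF assms(1)] by (simp add: field_simps)
    finally show ?thesis .
  qed
  moreover have "a gchoose m = (b gchoose m) + (a - b) * W / fact m"
    using W(2) by (simp add: gbinomial_prod_rev add_divide_distrib atLeast0LessThan)
  ultimately show ?thesis unfolding rat_cong_def by auto
qed

lemma zp_of_rat_Qcoef_eq:
  fixes p :: int and N M :: nat
  assumes "prime p" "odd p" "N \<ge> 1" "2 * N + 1 = nat p ^ s"
    and "k + multiplicity p (fact M :: int) \<le> s" "\<forall>i. a i \<le> M"
  shows "zp_of_rat p (Qcoef n (of_nat N) j a) k = zp_of_rat p (Qcoef n (- 1/2) j a) k"
proof -
  have half: "p_integral p (1 / 2)" by (rule p_integral_half[OF assms(1,2)])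
  have mhalf: "p_integral p (- 1/2)"
    using p_integral_minus[OF half] by (simp only: minus_divide_left)
  have ps: "(of_nat (2 * N + 1) :: rat) = of_int (p ^ s)"
  proof -
    have "int (nat p ^ s) = p ^ s" using prime_gt_1_int[OF assms(1)] by simp
    then show ?thesis unfolding assms(4) by (metis of_int_of_nat_eq)
  qed
  have d0: "of_nat N - (- 1/2) = of_int (p ^ s) * (1 / (2 :: rat))"
    unfolding ps[symmetric] by simp
  have B: "rat_cong p k (of_nat N gchoose m) ((- 1/2) gchoose m) \<and> p_integral p (of_nat N gchoose m)"
    if "m \<le> M" for m
    using gbinomial_rat_cong[OF assms(1) p_integral_of_nat mhalf half d0 that assms(5)] by simp
  have d1: "of_nat (N - 1) - (- 1/2 - 1) = of_int (p ^ s) * (1 / (2 :: rat))"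
    unfolding ps[symmetric] using assms(3) by (simp add: of_nat_diff)
  have N1: "(of_nat N :: rat) - 1 = of_nat (N - 1)" using assms(3) by (simp add: of_nat_diff)
  have B1: "rat_cong p k ((of_nat N - 1) gchoose m) ((- 1/2 - 1) gchoose m)
      \<and> p_integral p ((of_nat N - 1) gchoose m)" if "m \<le> M" for m
    unfolding N1 using gbinomial_rat_cong[OF assms(1) p_integral_of_nat
        p_integral_diff[OF mhalf p_integral_1] half d1 that assms(5)] by simp
  have P: "rat_cong p k (\<Prod>i\<in>I. of_nat N gchoose a i) (\<Prod>i\<in>I. (- 1/2) gchoose a i)
      \<and> p_integral p (\<Prod>i\<in>I. of_nat N gchoose a i)" if "finite I" for I
  proof
    show "rat_cong p k (\<Prod>i\<in>I. of_nat N gchoose a i) (\<Prod>i\<in>I. (- 1/2) gchoose a i)"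
      by (rule rat_cong_prod[OF that]) (use B assms(6) in blast)
    show "p_integral p (\<Prod>i\<in>I. of_nat N gchoose a i)"
      by (rule p_integral_prod) (use B assms(6) in blast)
  qed
  have "rat_cong p k (Qcoef n (of_nat N) j a) (Qcoef n (- 1/2) j a) \<and> p_integral p (Qcoef n (of_nat N) j a)"
  proof (cases "j \<le> n - 1")
    case True
    have "finite ({1..n - 1} - {j})" by simp
    with B1[of "a j"] P[of "{1..n - 1} - {j}"] assms(6) True show ?thesis
      unfolding Qcoef_def by (simp add: rat_cong_mult)
  next
    case False
    then show ?thesis unfolding Qcoef_def using P[of "{1..n - 1}"] by simp
  qed
  then show ?thesis using zp_of_rat_eq_if_rat_cong[OF assms(1)] rat_cong_p_integral by blast
qed

section \<open>Truncating Q modulo p^k\<close>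

lemma zp_sum_level_cong:
  assumes "\<And>a. a \<in> A \<Longrightarrow> f a k = g a k"
  shows "zp_sum p f A k = zp_sum p g A k"
proof -
  have "{a \<in> A. f a k mod p ^ k \<noteq> 0} = {a \<in> A. g a k mod p ^ k \<noteq> 0}" using assms by auto
  then show ?thesis unfolding zp_sum_def
    using assms by (intro arg_cong[where f = "\<lambda>s. s mod p ^ k"] sum.cong) auto
qed

lemma zp_sum_level_eq_sum:
  assumes "finite B" "B \<subseteq> A" "\<And>a. a \<in> A - B \<Longrightarrow> f a k = 0"
  shows "zp_sum p f A k = (\<Sum>a\<in>B. f a k) mod p ^ k"
proof -
  define F where "F = {a \<in> A. f a k mod p ^ k \<noteq> 0}"
  have FB: "F \<subseteq> B"
  proof
    fix a assume "a \<in> F"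
    then show "a \<in> B" using assms(3)[of a] unfolding F_def by (cases "a \<in> B") auto
  qed
  have "(\<Sum>a\<in>B. f a k) = (\<Sum>a\<in>F. f a k) + (\<Sum>a\<in>B - F. f a k)"
    using sum.subset_diff[OF FB assms(1)] by (simp add: add.commute)
  moreover have "p ^ k dvd (\<Sum>a\<in>B - F. f a k)"
    using assms(2) by (intro dvd_sum) (auto simp: F_def)
  ultimately have "(\<Sum>a\<in>B. f a k) mod p ^ k = (\<Sum>a\<in>F. f a k) mod p ^ k"
    by (simp add: dvd_imp_mod_0 mod_add_right_eq[symmetric])
  then show ?thesis unfolding zp_sum_def F_def by simp
qed

lemma zp_sum_level_subset:
  assumes "finite B" "B \<subseteq> A" "\<And>a. a \<in> A - B \<Longrightarrow> f a k = 0"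
  shows "zp_sum p f A k = zp_sum p f B k"
  using zp_sum_level_eq_sum[of B A f k p, OF assms] zp_sum_level_eq_sum[of B B f k p] assms(1) by simp

definition Xmon_degree :: "nat \<Rightarrow> nat \<Rightarrow> (nat \<Rightarrow> nat) \<Rightarrow> nat" where
  "Xmon_degree n l a = (\<Sum>i\<in>{2..n - 2*l}. a (i - 1)) + (\<Sum>i\<in>{n - 2*l + 1..n - 1}. a i)"

lemma Xmon_level_zero:
  assumes "\<forall>i\<in>{2..n - 1}. p dvd x i k" "k \<le> Xmon_degree n l a" "1 \<le> l" "1 \<le> n - 2*l"
  shows "Xmon p n l a x k = 0"
proof -
  define I1 where "I1 = {2..n - 2*l}"
  define I2 where "I2 = {n - 2*l + 1..n - 1}"
  have "I1 \<subseteq> {2..n - 1}" "I2 \<subseteq> {2..n - 1}" unfolding I1_def I2_def using assms(3,4) by auto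
  then have "p ^ (\<Sum>i\<in>I1. a (i - 1)) dvd (\<Prod>i\<in>I1. x i k ^ a (i - 1))"
    "p ^ (\<Sum>i\<in>I2. a i) dvd (\<Prod>i\<in>I2. x i k ^ a i)"
    unfolding power_sum using assms(1) by (auto intro!: prod_dvd_prod dvd_power_same)
  then have "p ^ Xmon_degree n l a dvd (\<Prod>i\<in>I1. x i k ^ a (i - 1)) * (\<Prod>i\<in>I2. x i k ^ a i)"
    unfolding Xmon_degree_def I1_def[symmetric] I2_def[symmetric] power_add by (rule mult_dvd_mono)
  then have "p ^ k dvd (\<Prod>i\<in>I1. x i k ^ a (i - 1)) * (\<Prod>i\<in>I2. x i k ^ a i)"
    using assms(2) le_imp_power_dvd dvd_trans by blast
  then show ?thesis
    unfolding Xmon_def zp_mult_def zp_prod_def zp_pow_def I1_def[symmetric] I2_def[symmetric]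
    by (simp add: mod_prod_eq mod_mult_eq)
qed

lemma Qidx_exponent_le_degree:
  assumes "a \<in> Qidx n l j" "1 \<le> n - 2*l"
  shows "a i \<le> Xmon_degree n l a + l"
proof (cases "i \<in> {1..n - 1}")
  case True
  have balance: "(\<Sum>i=1..n - 2*l. a i) \<le> (\<Sum>i=n - 2*l + 1..n - 1. a i) + l"
    using assms(1) unfolding Qidx_def by auto
  consider "i < n - 2*l" | "i = n - 2*l" | "i > n - 2*l" by linarith
  then show ?thesis
  proof cases
    case 1
    then have "a ((i + 1) - 1) \<le> (\<Sum>i\<in>{2..n - 2*l}. a (i - 1))"
      using True by (intro member_le_sum) auto
    then show ?thesis unfolding Xmon_degree_def by simp
  next
    case 2
    then have "a i \<le> (\<Sum>i=1..n - 2*l. a i)" using assms(2) by (intro member_le_sum) auto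
    then show ?thesis using balance unfolding Xmon_degree_def by linarith
  next
    case 3
    then have "a i \<le> (\<Sum>i=n - 2*l + 1..n - 1. a i)" using True by (intro member_le_sum) auto
    then show ?thesis unfolding Xmon_degree_def by simp
  qed
next
  case False
  then show ?thesis using assms(1) unfolding Qidx_def by simp
qed

lemma finite_Qidx_bounded: "finite (Qidx n l j \<inter> {a. \<forall>i. a i \<le> M})"
proof (rule finite_subset)
  show "Qidx n l j \<inter> {a. \<forall>i. a i \<le> M} \<subseteq>
      {f. \<forall>x. (x \<in> {1..n - 1} \<longrightarrow> f x \<in> {0..M}) \<and> (x \<notin> {1..n - 1} \<longrightarrow> f x = 0)}"
    unfolding Qidx_def by auto
  show "finite {f. \<forall>x. (x \<in> {1..n - 1} \<longrightarrow> f x \<in> {0..M}) \<and> (x \<notin> {1..n - 1} \<longrightarrow> f x = (0::nat))}"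
    by (rule finite_set_of_finite_funs) auto
qed

lemma Qcomp_level_truncate:
  assumes "1 \<le> l" "1 \<le> n - 2*l" "\<forall>i\<in>{2..n - 1}. p dvd x i k"
  shows "Qcomp p n l \<mu> A j x k = Qcomp p n l \<mu> (A \<inter> {a. \<forall>i. a i \<le> k + l}) j x k"
proof -
  define f where "f a = zp_mult p (zp_of_rat p (Qcoef n \<mu> j a)) (Xmon p n l a x)" for a
  define B where "B = Qidx n l j \<inter> (A \<inter> {a. \<forall>i. a i \<le> k + l})"
  have "finite B" unfolding B_def by (rule finite_subset[OF _ finite_Qidx_bounded]) auto
  moreover have "f a k = 0" if "a \<in> Qidx n l j \<inter> A - B" for a
  proof -
    have "\<not> (\<forall>i. a i \<le> k + l)" using that unfolding B_def by auto
    then obtain i where "a i > k + l" by (auto simp: not_le)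
    then have "k \<le> Xmon_degree n l a"
      using Qidx_exponent_le_degree[OF _ assms(2), of a j i] that by simp
    then show ?thesis
      unfolding f_def zp_mult_def
      using Xmon_level_zero[where a = a and x = x and p = p and n = n and l = l and k = k,
          OF assms(3) _ assms(1,2)]
      by simp
  qed
  ultimately have "zp_sum p f (Qidx n l j \<inter> A) k = zp_sum p f B k"
    by (intro zp_sum_level_subset) (auto simp: B_def)
  then show ?thesis unfolding Qcomp_def f_def[symmetric] B_def by (simp add: zp_mult_def)
qed

lemma Qcomp_level_cong_coef:
  assumes "\<And>a. a \<in> Qidx n l j \<inter> A \<Longrightarrow> zp_of_rat p (Qcoef n \<mu> j a) k = zp_of_rat p (Qcoef n \<mu>' j a) k"
  shows "Qcomp p n l \<mu> A j x k = Qcomp p n l \<mu>' A j x k"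
  unfolding Qcomp_def zp_mult_def
  using zp_sum_level_cong[of "Qidx n l j \<inter> A" "\<lambda>a. zp_mult p (zp_of_rat p (Qcoef n \<mu> j a)) (Xmon p n l a x)"
      k "\<lambda>a. zp_mult p (zp_of_rat p (Qcoef n \<mu>' j a)) (Xmon p n l a x)" p]
  by (simp add: assms zp_mult_def)

lemma odd_prime_power_half:
  fixes p :: int and s :: nat
  assumes "prime p" "odd p"
  defines "N \<equiv> nat ((p ^ s - 1) div 2)"
  shows "2 * N + 1 = nat p ^ s" "of_int ((p ^ s - 1) div 2) = (of_nat N :: rat)" "s < 2 * N + 1"
proof -
  have p1: "p > 1" using assms prime_gt_1_int by blast
  have "2 * ((p ^ s - 1) div 2) = p ^ s - 1" using assms(2) by simp
  moreover have "(p ^ s - 1) div 2 \<ge> 0" using p1 by simp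
  ultimately have "int (2 * N + 1) = int (nat p ^ s)" using p1 unfolding N_def by simp
  then show N: "2 * N + 1 = nat p ^ s" by (rule of_nat_eq_iff[THEN iffD1])
  show "of_int ((p ^ s - 1) div 2) = (of_nat N :: rat)"
    using p1 unfolding N_def by (simp add: pos_imp_zdiv_nonneg_iff)
  have "s < 2 ^ s" by (rule less_exp)
  also have "(2::nat) ^ s \<le> nat p ^ s" using p1 by (intro power_mono) auto
  finally show "s < 2 * N + 1" unfolding N .
qed

lemma eventually_Qls_level_eq_Ql:
  fixes p :: int
  assumes "prime p" "odd p" "1 \<le> l" "1 \<le> n - 2*l"
  shows "\<forall>\<^sub>F s in sequentially. \<forall>x. (\<forall>i\<in>{2..n - 1}. p dvd x i k) \<longrightarrow>
           Qls p n l s j x k = Ql p n l j x k"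
proof -
  define M where "M = k + l"
  define V where "V = multiplicity p (fact M :: int)"
  have "Qls p n l s j x k = Ql p n l j x k"
    if s: "k + V + 2 * M \<le> s" and x: "\<forall>i\<in>{2..n - 1}. p dvd x i k" for s x
  proof -
    define N where "N = nat ((p ^ s - 1) div 2)"
    note half = odd_prime_power_half[OF assms(1,2), of s, folded N_def]
    define Box where "Box = {a :: nat \<Rightarrow> nat. \<forall>i. a i \<le> M}"
    have "M \<le> N" "1 \<le> N" using half(3) s assms(3) unfolding M_def by auto
    then have "{a. \<forall>i. a i \<le> N} \<inter> Box = Box" unfolding Box_def by (auto intro: le_trans)
    have "Qls p n l s j x k = Qcomp p n l (of_nat N) ({a. \<forall>i. a i \<le> N} \<inter> Box) j x k"
      unfolding Qls_def half(2) N_def[symmetric] Box_def M_def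
      by (rule Qcomp_level_truncate[where x = x and p = p and k = k, OF assms(3,4) x])
    also have "\<dots> = Qcomp p n l (- 1/2) Box j x k"
      unfolding \<open>{a. \<forall>i. a i \<le> N} \<inter> Box = Box\<close>
      by (rule Qcomp_level_cong_coef, rule zp_of_rat_Qcoef_eq[OF assms(1,2) \<open>1 \<le> N\<close> half(1)])
        (use s in \<open>auto simp: V_def Box_def\<close>)
    also have "\<dots> = Ql p n l j x k"
      unfolding Ql_def
      using Qcomp_level_truncate[where x = x and p = p and k = k and \<mu> = "- 1/2" and A = UNIV,
          OF assms(3,4) x]
      by (simp add: Box_def M_def)
    finally show ?thesis .
  qed
  then show ?thesis unfolding eventually_sequentially by blast
qed

section \<open>Convergence of J^{l,s}\<close>

lemma Ddisc_zero_dvd: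
  fixes p :: int
  assumes "prime p" "x \<in> Ddisc p 0"
  shows "p dvd x k"
proof -
  have x: "x \<in> Zp p" "x 1 = 0" using assms mem_Ddisc_iff by auto
  show ?thesis
  proof (cases "k = 0")
    case True
    have "x 0 = 0" using Zp_eq_mod_power[OF x(1), of 0] by simp
    then show ?thesis using True by simp
  next
    case False
    then show ?thesis using Zp_cong_level_one[OF x(1), of k] x(2) by (simp add: cong_0_iff)
  qed
qed

lemma Jls_level_eq_if_Qls_level_eq:
  fixes p \<beta> :: int
  assumes "prime p" "odd p" "\<not> p dvd \<beta>" "x 1 \<in> Ddisc p (\<beta>^2)" "k \<le> s"
    and Q: "Qls p n l s j x k = Ql p n l j x k"
  shows "Jls p n l s j x k = zp_mult p (teich p \<beta>) (Jl p \<beta> n l j x) k"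
proof (cases "k = 0")
  case True
  then show ?thesis unfolding Jls_def zp_mult_def by simp
next
  case False
  define y where "y = zp_sqrt p \<beta> (x 1)"
  define z where "z = zp_inv p y"
  note y = zp_sqrt_levels[OF assms(1-4), folded y_def]
  have y_cong: "[y k' = \<beta>] (mod p)" if "k' \<noteq> 0" for k'
    using y(2)[of k'] that unfolding is_sqrt_level_def by auto
  have "[y k * z k = 1] (mod p ^ k)"
    unfolding z_def using zp_inv_levels(2)[OF assms(1) y(1)] y_cong assms(3) cong_dvd_iff by blast
  moreover have "x 1 \<in> Zp p" using assms(4) mem_Ddisc_iff[OF assms(1)] by blast
  then have "[x 1 k = y k * y k] (mod p ^ k)"
    using y(2)[of k] Zp_eq_mod_power[of "x 1" p k] unfolding is_sqrt_level_def cong_def by simp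
  ultimately have "[x 1 k ^ nat ((p ^ s - 1) div 2) = \<beta> ^ (nat p ^ k) * z k] (mod p ^ k)"
    using cong_pow_half_teich[OF assms(1,5) odd_prime_power_half(1)[OF assms(1,2)] y_cong[OF False]]
    by blast
  then have "[x 1 k ^ nat ((p ^ s - 1) div 2) * Ql p n l j x k
      = \<beta> ^ (nat p ^ k) * (z k * Ql p n l j x k)] (mod p ^ k)"
    using cong_scalar_right by (metis mult.assoc)
  moreover have "[teich p \<beta> k * (z k * Ql p n l j x k) = \<beta> ^ (nat p ^ k) * (z k * Ql p n l j x k)] (mod p ^ k)"
    unfolding teich_eq_teich_seq[OF assms(1)] teich_seq_def cong_def by (simp add: mod_mult_left_eq)
  moreover have "Jls p n l s j x k = (x 1 k ^ nat ((p ^ s - 1) div 2) * Ql p n l j x k) mod p ^ k"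
    unfolding Jls_def zp_mult_def zp_pow_def Q by (simp add: mod_mult_left_eq)
  moreover have "zp_mult p (teich p \<beta>) (Jl p \<beta> n l j x) k = (teich p \<beta> k * (z k * Ql p n l j x k)) mod p ^ k"
    unfolding Jl_def zp_mult_def z_def y_def by (simp add: mod_mult_right_eq)
  ultimately show ?thesis unfolding cong_def by simp
qed

theorem theorem10p5:
  fixes p :: int and g n l :: nat and \<beta> :: int
  assumes "prime p" and "odd p" and "g \<ge> 1" and "n = 2*g + 1" and "p > int n"
    and "1 \<le> l" and "l \<le> g"
    and "\<not> p dvd \<beta>"
  shows "\<forall>j\<in>{1..n}. zp_unif_conv p
           (\<lambda>s x. Jls p n l s j x)
           (\<lambda>x. zp_mult p (teich p \<beta>) (Jl p \<beta> n l j x))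
           {x. x 1 \<in> Ddisc p (\<beta>^2) \<and> (\<forall>i\<in>{2..n - 1}. x i \<in> Ddisc p 0)}"
proof
  fix j
  let ?S = "{x. x 1 \<in> Ddisc p (\<beta>^2) \<and> (\<forall>i\<in>{2..n - 1}. x i \<in> Ddisc p 0)}"
  have "1 \<le> n - 2*l" using assms(4,7) by simp
  have levels: "\<forall>\<^sub>F s in sequentially.
      \<forall>x\<in>?S. Jls p n l s j x k = zp_mult p (teich p \<beta>) (Jl p \<beta> n l j x) k" for k
    using eventually_Qls_level_eq_Ql[OF assms(1,2,6) \<open>1 \<le> n - 2*l\<close>, of k j] eventually_ge_at_top[of k]
  proof eventually_elim
    case (elim s)
    then show ?case
      using Jls_level_eq_if_Qls_level_eq[OF assms(1,2,8)] Ddisc_zero_dvd[OF assms(1)] by simp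
  qed
  show "zp_unif_conv p (\<lambda>s x. Jls p n l s j x) (\<lambda>x. zp_mult p (teich p \<beta>) (Jl p \<beta> n l j x)) ?S"
    by (rule zp_unif_conv_levelwise[OF prime_gt_1_int[OF assms(1)] levels])
qed

end
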